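(* Let $L$ be one of the logics $\mathbf{IL}^-(\mathbf{J4}_{+})$, $\mathbf{IL}^-(\mathbf{J1},\mathbf{J4}_{+})$, $\mathbf{IL}^-(\mathbf{J4}_{+},\mathbf{J5})$, $\mathbf{IL}^-(\mathbf{J1},\mathbf{J4}_{+},\mathbf{J5})$. For any modal formula $A$ the following are equivalent: (i) $L\vdash A$; (ii) $A$ is valid in all simplified $L$-frames; (iii) $A$ is valid in all finite simplified $L$-frames.
   Context: Modal formulas are built from propositional variables, $\top$, $\bot$ using $\to,\lor,\land$, unary $\Box$ and binary $\rhd$; $\lnot A:=A\to\bot$, $\Diamond A:=\lnot\Box\lnot A$. The logic $\mathbf{IL}^-$ has as axioms all tautologies, $\Box(A\to B)\to(\Box A\to\Box B)$, $\Box(\Box A\to A)\to\Box A$, $\mathbf{J3}$: $(A\rhd C)\land(B\rhd C)\to(A\lor B)\rhd C$, and $\mathbf{J6}$: $\Box\lnot A\leftrightarrow A\rhd\bot$; its rules are modus ponens, necessitation ($A/\Box A$), $\mathbf{R1}$: from $A\to B$ infer $C\rhd A\to C\rhd B$, and $\mathbf{R2}$: from $A\to B$ infer $B\rhd C\to A\rhd C$. $\mathbf{IL}^-(\Sigma_1,\dots,\Sigma_n)$ denotes $\mathbf{IL}^-$ with the axiom schemes $\Sigma_i$ added, where $\mathbf{J1}$: $\Box(A\to B)\to A\rhd B$; $\mathbf{J4}_{+}$: $\Box(A\to B)\to(C\rhd A\to C\rhd B)$; $\mathbf{J5}$: $\Diamond A\rhd A$. A simplified $\mathbf{IL}^-(\mathbf{J4}_{+})$-frame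 is $(W,R,S)$ with $W$ non-empty, $R$ a transitive, conversely well-founded binary relation on $W$, $S$ any binary relation on $W$; it is finite if $W$ is finite. Forcing: arbitrary on variables, Boolean clauses as usual, $x\Vdash\Box A$ iff $y\Vdash A$ for all $y$ with $xRy$, and $x\Vdash A\rhd B$ iff for every $y$ with $xRy$ and $y\Vdash A$ there is $z$ with $xRz$, $ySz$, $z\Vdash B$. $A$ is valid in a frame if it is forced at every point under every forcing relation. A simplified $L$-frame is a simplified $\mathbf{IL}^-(\mathbf{J4}_{+})$-frame such that: if $\mathbf{J1}$ is an axiom of $L$ then $S$ is reflexive; if $\mathbf{J5}$ is an axiom of $L$ then $R\subseteq S$. *)

theory Defs
  imports Main "HOL-Library.Infinite_Typeclass"
begin

datatype fm =
    Var nat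
  | Top
  | Bot
  | Imp fm fm
  | Or fm fm
  | And fm fm
  | Box fm
  | Rhd fm fm

definition Neg :: "fm \<Rightarrow> fm" where "Neg A = Imp A Bot"
definition Dia :: "fm \<Rightarrow> fm" where "Dia A = Neg (Box (Neg A))"
definition Iff :: "fm \<Rightarrow> fm \<Rightarrow> fm" where "Iff A B = And (Imp A B) (Imp B A)"

fun peval :: "(fm \<Rightarrow> bool) \<Rightarrow> fm \<Rightarrow> bool" where
  "peval g (Var n) = g (Var n)"
| "peval g Top = True"
| "peval g Bot = False"
| "peval g (Imp A B) = (peval g A \<longrightarrow> peval g B)"
| "peval g (Or A B) = (peval g A \<or> peval g B)"
| "peval g (And A B) = (peval g A \<and> peval g B)"
| "peval g (Box A) = g (Box A)"
| "peval g (Rhd A B) = g (Rhd A B)"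

definition taut :: "fm \<Rightarrow> bool" where "taut A = (\<forall>g. peval g A)"

text \<open>prov j1 j5 A: A is provable in IL^-(J4+) extended by J1 if j1 and by J5 if j5.
 The four combinations of j1, j5 give exactly the four logics of the theorem.\<close>
inductive prov :: "bool \<Rightarrow> bool \<Rightarrow> fm \<Rightarrow> bool" for j1 j5 where
  ax_taut: "taut A \<Longrightarrow> prov j1 j5 A"
| ax_K: "prov j1 j5 (Imp (Box (Imp A B)) (Imp (Box A) (Box B)))"
| ax_L: "prov j1 j5 (Imp (Box (Imp (Box A) A)) (Box A))"
| ax_J3: "prov j1 j5 (Imp (And (Rhd A C) (Rhd B C)) (Rhd (Or A B) C))"
| ax_J6: "prov j1 j5 (Iff (Box (Neg A)) (Rhd A Bot))"
| ax_J4p: "prov j1 j5 (Imp (Box (Imp A B)) (Imp (Rhd C A) (Rhd C B)))"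
| ax_J1: "j1 \<Longrightarrow> prov j1 j5 (Imp (Box (Imp A B)) (Rhd A B))"
| ax_J5: "j5 \<Longrightarrow> prov j1 j5 (Rhd (Dia A) A)"
| mp: "prov j1 j5 (Imp A B) \<Longrightarrow> prov j1 j5 A \<Longrightarrow> prov j1 j5 B"
| nec: "prov j1 j5 A \<Longrightarrow> prov j1 j5 (Box A)"
| R1: "prov j1 j5 (Imp A B) \<Longrightarrow> prov j1 j5 (Imp (Rhd C A) (Rhd C B))"
| R2: "prov j1 j5 (Imp A B) \<Longrightarrow> prov j1 j5 (Imp (Rhd B C) (Rhd A C))"

definition simp_frame :: "'w set \<Rightarrow> ('w \<Rightarrow> 'w \<Rightarrow> bool) \<Rightarrow> ('w \<Rightarrow> 'w \<Rightarrow> bool) \<Rightarrow> bool" where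
  "simp_frame W R S \<longleftrightarrow>
     W \<noteq> {}
   \<and> (\<forall>x y. R x y \<longrightarrow> x \<in> W \<and> y \<in> W)
   \<and> (\<forall>x y. S x y \<longrightarrow> x \<in> W \<and> y \<in> W)
   \<and> transp R
   \<and> wfP (\<lambda>x y. R y x)"

definition L_frame :: "bool \<Rightarrow> bool \<Rightarrow> 'w set \<Rightarrow> ('w \<Rightarrow> 'w \<Rightarrow> bool) \<Rightarrow> ('w \<Rightarrow> 'w \<Rightarrow> bool) \<Rightarrow> bool" where
  "L_frame j1 j5 W R S \<longleftrightarrow>
     simp_frame W R S
   \<and> (j1 \<longrightarrow> (\<forall>x\<in>W. S x x))
   \<and> (j5 \<longrightarrow> (\<forall>x y. R x y \<longrightarrow> S x y))"

fun forces :: "('w \<Rightarrow> 'w \<Rightarrow> bool) \<Rightarrow> ('w \<Rightarrow> 'w \<Rightarrow> bool) \<Rightarrow> ('w \<Rightarrow> nat \<Rightarrow> bool) \<Rightarrow> 'w \<Rightarrow> fm \<Rightarrow> bool" where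
  "forces R S V x (Var n) = V x n"
| "forces R S V x Top = True"
| "forces R S V x Bot = False"
| "forces R S V x (Imp A B) = (forces R S V x A \<longrightarrow> forces R S V x B)"
| "forces R S V x (Or A B) = (forces R S V x A \<or> forces R S V x B)"
| "forces R S V x (And A B) = (forces R S V x A \<and> forces R S V x B)"
| "forces R S V x (Box A) = (\<forall>y. R x y \<longrightarrow> forces R S V y A)"
| "forces R S V x (Rhd A B) =
     (\<forall>y. R x y \<and> forces R S V y A \<longrightarrow> (\<exists>z. R x z \<and> S y z \<and> forces R S V z B))"

definition valid_in :: "'w set \<Rightarrow> ('w \<Rightarrow> 'w \<Rightarrow> bool) \<Rightarrow> ('w \<Rightarrow> 'w \<Rightarrow> bool) \<Rightarrow> fm \<Rightarrow> bool" where
  "valid_in W R S A \<longleftrightarrow> (\<forall>V. \<forall>x\<in>W. forces R S V x A)"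

end

theory Submission
  imports Defs "HOL-Library.Sublist"
begin

text \<open>L is sound because \<open>R\<close> is transitive and conversely well-founded. For completeness,
  an unprovable \<open>A\<close> is refuted in a finite model whose worlds are chains of atoms, i.e. of
  maximal consistent subsets of a finite set \<open>Phi\<close> containing the subformulas of \<open>A\<close>. Each
  link of a chain adds a boxed formula, so chains are short, and carries a label \<open>D\<close>: \<open>R\<close> is
  proper extension of chains, and \<open>S\<close> relates a world \<open>y\<close> to every world except those above
  the parent of \<open>y\<close> that contain the label of \<open>y\<close>. A child labelled \<open>D\<close> is created to
  refute some \<open>C \<rhd> D\<close>; the labels also make \<open>S\<close> reflexive under J1 and \<open>R \<subseteq> S\<close> under
  J5. A finite frame can finally be copied into any infinite type.\<close>

lemma peval_forces: "peval (forces R S V x) A = forces R S V x A"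
  by (induction A) auto

lemma forces_Loeb:
  assumes "transp R" and "wfp (\<lambda>x y. R y x)"
  shows "forces R S V x (Imp (Box (Imp (Box A) A)) (Box A))"
proof -
  have "R x y \<longrightarrow> forces R S V y A"
    if hyp: "\<forall>y. R x y \<longrightarrow> (\<forall>z. R y z \<longrightarrow> forces R S V z A) \<longrightarrow> forces R S V y A" for y
    using assms(2)
  proof (induction y rule: wfp_induct_rule)
    case (less y)
    have "forces R S V z A" if "R x y" "R y z" for z
      using less that assms(1) by (meson transpD)
    then show ?case
      using hyp by blast
  qed
  then show ?thesis
    by auto
qed

theorem soundness:
  assumes "prov j1 j5 A" and "L_frame j1 j5 W R S"
  shows "valid_in W R S A"
proof -
  have in_W: "\<And>x y. R x y \<Longrightarrow> y \<in> W" and "transp R" "wfp (\<lambda>x y. R y x)"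
    and refl: "j1 \<Longrightarrow> x \<in> W \<Longrightarrow> S x x" and R_S: "j5 \<Longrightarrow> R x y \<Longrightarrow> S x y" for x y
    using assms(2) by (auto simp: L_frame_def simp_frame_def)
  then have trans: "R x y \<Longrightarrow> R y z \<Longrightarrow> R x z" for x y z
    by (meson transpD)
  from assms(1) show ?thesis
  proof (induction rule: prov.induct)
    case (ax_taut A)
    then have "forces R S V x A" for V x
      using peval_forces[of R S V x A] unfolding taut_def by blast
    then show ?case
      by (simp add: valid_in_def)
  next
    case (ax_L A)
    show ?case
      using forces_Loeb[OF \<open>transp R\<close> \<open>wfp (\<lambda>x y. R y x)\<close>] unfolding valid_in_def by blast
  next
    case (ax_J1 A B)
    then show ?case
      using refl in_W by (auto simp: valid_in_def)
  next
    case (ax_J5 A)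
    then show ?case
      by (simp add: valid_in_def Dia_def Neg_def) (meson R_S trans)
  next
    case (ax_J4p A B C)
    show ?case
      by (simp add: valid_in_def) blast
  next
    case (R1 A B C)
    then have "forces R S V z B" if "R x z" "forces R S V z A" for V x z
      using in_W that by (auto simp: valid_in_def)
    then show ?case
      by (simp add: valid_in_def) blast
  next
    case (R2 A B C)
    then have "forces R S V y B" if "R x y" "forces R S V y A" for V x y
      using in_W that by (auto simp: valid_in_def)
    then show ?case
      by (simp add: valid_in_def) blast
  next
    case (nec A)
    then show ?case
      using in_W by (simp add: valid_in_def)
  qed (auto simp: valid_in_def Iff_def Neg_def)
qed

definition rel_image :: "('a \<Rightarrow> 'b) \<Rightarrow> ('a \<Rightarrow> 'a \<Rightarrow> bool) \<Rightarrow> 'b \<Rightarrow> 'b \<Rightarrow> bool" where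
  "rel_image f R a b \<longleftrightarrow> (\<exists>x y. R x y \<and> a = f x \<and> b = f y)"

lemma rel_imageI: "R x y \<Longrightarrow> rel_image f R (f x) (f y)"
  unfolding rel_image_def by blast

lemma rel_imageE:
  assumes "rel_image f R (f x) b" and "inj_on f W" and "\<forall>x y. R x y \<longrightarrow> x \<in> W \<and> y \<in> W"
    and "x \<in> W"
  obtains y where "R x y" and "b = f y"
proof -
  obtain u y where "R u y" "f x = f u" "b = f y"
    using assms(1) unfolding rel_image_def by blast
  moreover have "u = x"
    using assms(2-4) \<open>R u y\<close> \<open>f x = f u\<close> by (metis inj_onD)
  ultimately show ?thesis
    using that by blast
qed

lemma rel_image_iff:
  assumes "inj_on f W" and "\<forall>x y. R x y \<longrightarrow> x \<in> W \<and> y \<in> W" and "x \<in> W" and "y \<in> W"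
  shows "rel_image f R (f x) (f y) \<longleftrightarrow> R x y"
proof
  assume "rel_image f R (f x) (f y)"
  then obtain y' where "R x y'" and "f y = f y'"
    using rel_imageE[OF _ assms(1-3)] by blast
  moreover have "y = y'"
    using inj_onD[OF assms(1) \<open>f y = f y'\<close>] assms(2,4) \<open>R x y'\<close> by simp
  ultimately show "R x y"
    by simp
qed (rule rel_imageI)

lemma all_rel_image_iff:
  assumes "inj_on f W" and "\<forall>x y. R x y \<longrightarrow> x \<in> W \<and> y \<in> W" and "x \<in> W"
  shows "(\<forall>b. rel_image f R (f x) b \<longrightarrow> P b) \<longleftrightarrow> (\<forall>y. R x y \<longrightarrow> P (f y))"
  by (auto elim: rel_imageE[OF _ assms] intro: rel_imageI)

lemma ex_rel_image_iff:
  assumes "inj_on f W" and "\<forall>x y. R x y \<longrightarrow> x \<in> W \<and> y \<in> W" and "x \<in> W"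
  shows "(\<exists>b. rel_image f R (f x) b \<and> P b) \<longleftrightarrow> (\<exists>y. R x y \<and> P (f y))"
  by (auto elim: rel_imageE[OF _ assms] intro: rel_imageI)

lemma forces_rel_image:
  assumes inj: "inj_on f W" and R_W: "\<forall>x y. R x y \<longrightarrow> x \<in> W \<and> y \<in> W"
    and S_W: "\<forall>x y. S x y \<longrightarrow> x \<in> W \<and> y \<in> W"
    and V_V': "\<And>x. x \<in> W \<Longrightarrow> V' (f x) = V x" and "x \<in> W"
  shows "forces (rel_image f R) (rel_image f S) V' (f x) A \<longleftrightarrow> forces R S V x A"
  using assms(5)
proof (induction A arbitrary: x)
  case (Box B)
  have "forces (rel_image f R) (rel_image f S) V' (f y) B \<longleftrightarrow> forces R S V y B" if "R x y" for y
    using Box.IH R_W that by blast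
  then show ?case
    by (simp add: all_rel_image_iff[OF inj R_W Box.prems])
next
  case (Rhd C D)
  have "forces (rel_image f R) (rel_image f S) V' (f y) C \<longleftrightarrow> forces R S V y C"
    and "forces (rel_image f R) (rel_image f S) V' (f y) D \<longleftrightarrow> forces R S V y D" if "R x y" for y
    using Rhd.IH R_W that by blast+
  moreover have "rel_image f S (f y) (f z) \<longleftrightarrow> S y z" if "R x y" and "R x z" for y z
    using rel_image_iff[OF inj S_W] R_W that by blast
  ultimately show ?case
    by (simp add: all_rel_image_iff[OF inj R_W Rhd.prems] ex_rel_image_iff[OF inj R_W Rhd.prems]
        imp_conjL cong: conj_cong imp_cong)
qed (simp_all add: V_V')

lemma L_frame_rel_image:
  assumes inj: "inj_on f W" and frame: "L_frame j1 j5 W R S"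
  shows "L_frame j1 j5 (f ` W) (rel_image f R) (rel_image f S)"
proof -
  have "transp R" and wf: "wfp (\<lambda>x y. R y x)" and "W \<noteq> {}"
    and R_W: "\<forall>x y. R x y \<longrightarrow> x \<in> W \<and> y \<in> W" and S_W: "\<forall>x y. S x y \<longrightarrow> x \<in> W \<and> y \<in> W"
    and refl: "j1 \<Longrightarrow> x \<in> W \<Longrightarrow> S x x" and R_S: "j5 \<Longrightarrow> R x y \<Longrightarrow> S x y" for x y
    using frame by (auto simp: L_frame_def simp_frame_def)
  have "transp (rel_image f R)"
  proof (rule transpI)
    fix a b c
    assume "rel_image f R a b" and "rel_image f R b c"
    then obtain x y y' z where "R x y" "R y' z" "f y = f y'" "a = f x" "c = f z"
      unfolding rel_image_def by blast
    moreover have "y = y'"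
      using inj_onD[OF inj \<open>f y = f y'\<close>] R_W \<open>R x y\<close> \<open>R y' z\<close> by simp
    ultimately have "R x z"
      using transpD[OF \<open>transp R\<close>] by simp
    then show "rel_image f R a c"
      by (simp add: \<open>a = f x\<close> \<open>c = f z\<close> rel_imageI)
  qed
  moreover have "wfp (\<lambda>a b. rel_image f R b a)"
  proof (rule wfp_if_convertible_to_wfp[OF wf])
    fix a b
    assume "rel_image f R b a"
    then obtain x y where "R x y" "b = f x" "a = f y"
      unfolding rel_image_def by blast
    then show "R (inv_into W f b) (inv_into W f a)"
      using inj R_W by simp
  qed
  moreover have "rel_image f S a a" if "j1" "a \<in> f ` W" for a
    using that refl by (auto intro: rel_imageI)
  moreover have "rel_image f S a b" if "j5" "rel_image f R a b" for a b
    using that R_S unfolding rel_image_def by auto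
  moreover have "a \<in> f ` W \<and> b \<in> f ` W" if "rel_image f R a b \<or> rel_image f S a b" for a b
    using that R_W S_W unfolding rel_image_def by auto
  ultimately show ?thesis
    using \<open>W \<noteq> {}\<close> unfolding L_frame_def simp_frame_def by blast
qed

lemma L_frame_copy_into_infinite:
  assumes "finite W" and frame: "L_frame j1 j5 W R S" and "\<not> valid_in W R S A"
  shows "\<exists>(W'::'w::infinite set) R' S'. L_frame j1 j5 W' R' S' \<and> finite W' \<and> \<not> valid_in W' R' S' A"
proof -
  obtain f :: "_ \<Rightarrow> 'w" where inj: "inj_on f W"
    using arb_inj_on_finite_infinite[OF assms(1)] by blast
  obtain V x where "x \<in> W" and "\<not> forces R S V x A"
    using assms(3) by (auto simp: valid_in_def)
  have R_W: "\<forall>x y. R x y \<longrightarrow> x \<in> W \<and> y \<in> W" and S_W: "\<forall>x y. S x y \<longrightarrow> x \<in> W \<and> y \<in> W"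
    using frame by (auto simp: L_frame_def simp_frame_def)
  define V' where "V' a = V (inv_into W f a)" for a
  have "V' (f x) = V x" if "x \<in> W" for x
    unfolding V'_def using inv_into_f_f[OF inj that] by (rule arg_cong)
  then have "\<not> forces (rel_image f R) (rel_image f S) V' (f x) A"
    using forces_rel_image[OF inj R_W S_W _ \<open>x \<in> W\<close>] \<open>\<not> forces R S V x A\<close> by simp
  then have "\<not> valid_in (f ` W) (rel_image f R) (rel_image f S) A"
    using \<open>x \<in> W\<close> unfolding valid_in_def by auto
  moreover have "finite (f ` W)"
    using assms(1) by simp
  ultimately show ?thesis
    using L_frame_rel_image[OF inj frame] by (intro exI conjI)
qed

fun Conjs :: "fm list \<Rightarrow> fm" where
  "Conjs [] = Top"
| "Conjs (A # As) = And A (Conjs As)"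

fun Disjs :: "fm list \<Rightarrow> fm" where
  "Disjs [] = Bot"
| "Disjs (A # As) = Or A (Disjs As)"

lemma peval_Conjs [simp]: "peval g (Conjs As) \<longleftrightarrow> (\<forall>A\<in>set As. peval g A)"
  by (induction As) auto

lemma peval_Disjs [simp]: "peval g (Disjs As) \<longleftrightarrow> (\<exists>A\<in>set As. peval g A)"
  by (induction As) auto

lemma peval_Neg [simp]: "peval g (Neg A) \<longleftrightarrow> \<not> peval g A"
  by (simp add: Neg_def)

lemma peval_Iff [simp]: "peval g (Iff A B) \<longleftrightarrow> (peval g A \<longleftrightarrow> peval g B)"
  by (auto simp: Iff_def)

definition derives :: "bool \<Rightarrow> bool \<Rightarrow> fm set \<Rightarrow> fm \<Rightarrow> bool" where
  "derives j1 j5 \<Gamma> A \<longleftrightarrow> (\<exists>As. set As \<subseteq> \<Gamma> \<and> prov j1 j5 (Imp (Conjs As) A))"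

definition consistent :: "bool \<Rightarrow> bool \<Rightarrow> fm set \<Rightarrow> bool" where
  "consistent j1 j5 \<Gamma> \<longleftrightarrow> \<not> derives j1 j5 \<Gamma> Bot"

context
  fixes j1 j5 :: bool
begin

lemma prov_Conjs: "\<forall>A\<in>set As. prov j1 j5 A \<Longrightarrow> prov j1 j5 (Conjs As)"
proof (induction As)
  case Nil
  show ?case
    by (rule ax_taut) (simp add: taut_def)
next
  case (Cons A As)
  have "prov j1 j5 (Imp A (Imp (Conjs As) (Conjs (A # As))))"
    by (rule ax_taut) (simp add: taut_def)
  then show ?case
    using Cons mp by (meson list.set_intros)
qed

lemma prov_taut_consequence:
  assumes "taut (Imp (Conjs As) B)" and "\<forall>A\<in>set As. prov j1 j5 A"
  shows "prov j1 j5 B"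
  using mp[OF ax_taut[OF assms(1)] prov_Conjs[OF assms(2)]] .

lemma prov_Box_mono: "prov j1 j5 (Imp A B) \<Longrightarrow> prov j1 j5 (Imp (Box A) (Box B))"
  using ax_K mp nec by blast

lemma prov_Box_Conjs:
  "prov j1 j5 (Imp (Conjs As) B) \<Longrightarrow> prov j1 j5 (Imp (Conjs (map Box As)) (Box B))"
proof (induction As arbitrary: B)
  case Nil
  then have "prov j1 j5 (Box B)"
    by (intro nec prov_taut_consequence[of "[Imp Top B]"]) (auto simp: taut_def)
  then show ?case
    by (intro prov_taut_consequence[of "[Box B]"]) (auto simp: taut_def)
next
  case (Cons A As)
  have "prov j1 j5 (Imp (Conjs As) (Imp A B))"
    by (rule prov_taut_consequence[of "[Imp (Conjs (A # As)) B]"])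
      (use Cons.prems in \<open>auto simp: taut_def\<close>)
  then have "prov j1 j5 (Imp (Conjs (map Box As)) (Box (Imp A B)))"
    by (rule Cons.IH)
  then show ?case
    by (intro prov_taut_consequence[of "[Imp (Conjs (map Box As)) (Box (Imp A B)),
      Imp (Box (Imp A B)) (Imp (Box A) (Box B))]"]) (auto simp: taut_def intro: ax_K)
qed

lemma prov_Box_Box: "prov j1 j5 (Imp (Box A) (Box (Box A)))"
proof -
  let ?B = "And (Box A) A"
  have "prov j1 j5 (Imp (Box ?B) (Box A))" and "prov j1 j5 (Imp (Box ?B) (Box (Box A)))"
    by (intro prov_Box_mono ax_taut; simp add: taut_def)+
  then have "prov j1 j5 (Imp A (Imp (Box ?B) ?B))"
    by (intro prov_taut_consequence[of "[Imp (Box ?B) (Box A)]"]) (auto simp: taut_def)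
  then have "prov j1 j5 (Imp (Box A) (Box (Imp (Box ?B) ?B)))"
    by (rule prov_Box_mono)
  then show ?thesis
    by (intro prov_taut_consequence[of "[Imp (Box A) (Box (Imp (Box ?B) ?B)),
        Imp (Box (Imp (Box ?B) ?B)) (Box ?B), Imp (Box ?B) (Box (Box A))]"])
      (use \<open>prov j1 j5 (Imp (Box ?B) (Box (Box A)))\<close> in \<open>auto simp: taut_def intro: ax_L\<close>)
qed

text \<open>Split \<open>A\<close> into \<open>A \<and> B\<close>, which inherits \<open>B \<rhd> C\<close> by R2, and \<open>A \<and> \<not> B\<close>,
  which is excluded by \<open>\<Box>(A \<rightarrow> B)\<close> and J6; recombine by J3.\<close>

lemma prov_Box_Rhd_antimono: "prov j1 j5 (Imp (Box (Imp A B)) (Imp (Rhd B C) (Rhd A C)))"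
proof -
  let ?P = "And A B" and ?N = "And A (Neg B)"
  have 1: "prov j1 j5 (Imp (Rhd B C) (Rhd ?P C))"
    by (intro R2 ax_taut) (simp add: taut_def)
  have 2: "prov j1 j5 (Imp (Box (Imp A B)) (Box (Neg ?N)))"
    by (intro prov_Box_mono ax_taut) (simp add: taut_def)
  have 3: "prov j1 j5 (Iff (Box (Neg ?N)) (Rhd ?N Bot))"
    by (rule ax_J6)
  have 4: "prov j1 j5 (Imp (Rhd ?N Bot) (Rhd ?N C))"
    by (intro R1 ax_taut) (simp add: taut_def)
  have 5: "prov j1 j5 (Imp (And (Rhd ?P C) (Rhd ?N C)) (Rhd (Or ?P ?N) C))"
    by (rule ax_J3)
  have 6: "prov j1 j5 (Imp (Rhd (Or ?P ?N) C) (Rhd A C))"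
    by (intro R2 ax_taut) (auto simp: taut_def)
  show ?thesis
    by (rule prov_taut_consequence[of "[Imp (Rhd B C) (Rhd ?P C),
      Imp (Box (Imp A B)) (Box (Neg ?N)), Iff (Box (Neg ?N)) (Rhd ?N Bot),
      Imp (Rhd ?N Bot) (Rhd ?N C), Imp (And (Rhd ?P C) (Rhd ?N C)) (Rhd (Or ?P ?N) C),
      Imp (Rhd (Or ?P ?N) C) (Rhd A C)]"])
      (use 1 2 3 4 5 6 in \<open>auto simp: taut_def\<close>)
qed

lemma prov_Rhd_Bot: "prov j1 j5 (Rhd Bot C)"
proof -
  have "prov j1 j5 (Box (Neg Bot))"
    by (intro nec ax_taut) (simp add: taut_def)
  moreover have "prov j1 j5 (Imp (Rhd Bot Bot) (Rhd Bot C))"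
    by (intro R1 ax_taut) (simp add: taut_def)
  ultimately show ?thesis
    by (intro prov_taut_consequence[of "[Box (Neg Bot),
      Iff (Box (Neg Bot)) (Rhd Bot Bot), Imp (Rhd Bot Bot) (Rhd Bot C)]"])
      (auto simp: taut_def intro: ax_J6)
qed

lemma prov_Box_Neg_Rhd: "prov j1 j5 (Imp (Box (Neg B)) (Imp (Rhd A B) (Box (Neg A))))"
  by (rule prov_taut_consequence[of "[Imp (Box (Imp B Bot)) (Imp (Rhd A B) (Rhd A Bot)),
      Iff (Box (Neg A)) (Rhd A Bot)]"])
    (auto simp: taut_def Neg_def intro: ax_J4p ax_J6[unfolded Neg_def])

lemma derives_prov: "prov j1 j5 A \<Longrightarrow> derives j1 j5 \<Gamma> A"
  unfolding derives_def
  by (intro exI[of _ "[]"] conjI prov_taut_consequence[of "[A]"]) (auto simp: taut_def)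

lemma derives_empty: "derives j1 j5 {} A \<Longrightarrow> prov j1 j5 A"
  unfolding derives_def
  by (auto intro: prov_taut_consequence[of "[Imp (Conjs []) A]"] simp: taut_def)

lemma derives_mem: "A \<in> \<Gamma> \<Longrightarrow> derives j1 j5 \<Gamma> A"
  unfolding derives_def by (intro exI[of _ "[A]"] conjI ax_taut) (auto simp: taut_def)

lemma derives_mono: "derives j1 j5 \<Gamma> A \<Longrightarrow> \<Gamma> \<subseteq> \<Delta> \<Longrightarrow> derives j1 j5 \<Delta> A"
  unfolding derives_def by blast

lemma derives_mp:
  assumes "derives j1 j5 \<Gamma> (Imp A B)" and "derives j1 j5 \<Gamma> A"
  shows "derives j1 j5 \<Gamma> B"
proof -
  obtain As As' where "set As \<subseteq> \<Gamma>" "prov j1 j5 (Imp (Conjs As) (Imp A B))"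
    and "set As' \<subseteq> \<Gamma>" "prov j1 j5 (Imp (Conjs As') A)"
    using assms unfolding derives_def by blast
  moreover from this have "prov j1 j5 (Imp (Conjs (As @ As')) B)"
    by (intro prov_taut_consequence[of "[Imp (Conjs As) (Imp A B), Imp (Conjs As') A]"])
      (auto simp: taut_def)
  ultimately show ?thesis
    unfolding derives_def by (intro exI[of _ "As @ As'"]) auto
qed

lemma derives_prov_mp: "derives j1 j5 \<Gamma> A \<Longrightarrow> prov j1 j5 (Imp A B) \<Longrightarrow> derives j1 j5 \<Gamma> B"
  using derives_mp derives_prov by blast

lemma derives_Conjs: "\<forall>A\<in>set As. derives j1 j5 \<Gamma> A \<Longrightarrow> derives j1 j5 \<Gamma> (Conjs As)"
proof (induction As)
  case Nil
  show ?case
    by (intro derives_prov ax_taut) (simp add: taut_def)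
next
  case (Cons A As)
  have "prov j1 j5 (Imp A (Imp (Conjs As) (Conjs (A # As))))"
    by (rule ax_taut) (simp add: taut_def)
  then show ?case
    using Cons derives_mp derives_prov by (meson list.set_intros)
qed

lemma derives_taut_consequence:
  "taut (Imp (Conjs As) B) \<Longrightarrow> \<forall>A\<in>set As. derives j1 j5 \<Gamma> A \<Longrightarrow> derives j1 j5 \<Gamma> B"
  using derives_Conjs derives_prov_mp ax_taut by blast

lemma derives_cut:
  assumes "\<forall>A\<in>\<Delta>. derives j1 j5 \<Gamma> A" and "derives j1 j5 \<Delta> B"
  shows "derives j1 j5 \<Gamma> B"
proof -
  obtain As where "set As \<subseteq> \<Delta>" and "prov j1 j5 (Imp (Conjs As) B)"
    using assms(2) unfolding derives_def by blast
  then show ?thesis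
    using assms(1) derives_Conjs[of As] derives_prov_mp by blast
qed

lemma derives_deduction:
  assumes "derives j1 j5 (insert A \<Gamma>) B"
  shows "derives j1 j5 \<Gamma> (Imp A B)"
proof -
  obtain As where As: "set As \<subseteq> insert A \<Gamma>" "prov j1 j5 (Imp (Conjs As) B)"
    using assms unfolding derives_def by blast
  let ?As = "filter (\<lambda>A'. A' \<noteq> A) As"
  have "prov j1 j5 (Imp (Conjs ?As) (Imp A B))"
    by (rule prov_taut_consequence[of "[Imp (Conjs As) B]"]) (use As(2) in \<open>auto simp: taut_def\<close>)
  moreover have "set ?As \<subseteq> \<Gamma>"
    using As(1) by auto
  ultimately show ?thesis
    unfolding derives_def by blast
qed

lemma derives_Box:
  assumes "derives j1 j5 \<Gamma> A"
  shows "derives j1 j5 (Box ` \<Gamma>) (Box A)"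
proof -
  obtain As where "set As \<subseteq> \<Gamma>" and "prov j1 j5 (Imp (Conjs As) A)"
    using assms unfolding derives_def by blast
  then show ?thesis
    unfolding derives_def using prov_Box_Conjs by (intro exI[of _ "map Box As"]) auto
qed

lemma derives_Rhd_Disjs:
  "\<forall>E\<in>set Es. derives j1 j5 \<Gamma> (Rhd E D) \<Longrightarrow> derives j1 j5 \<Gamma> (Rhd (Disjs Es) D)"
proof (induction Es)
  case Nil
  then show ?case
    using prov_Rhd_Bot derives_prov by simp
next
  case (Cons E Es)
  then have "derives j1 j5 \<Gamma> (And (Rhd E D) (Rhd (Disjs Es) D))"
    by (intro derives_taut_consequence[of "[Rhd E D, Rhd (Disjs Es) D]"]) (auto simp: taut_def)
  then show ?case
    using ax_J3 derives_prov_mp by simp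
qed

lemma consistent_insert_or_insert_Neg:
  assumes "consistent j1 j5 \<Gamma>"
  shows "consistent j1 j5 (insert A \<Gamma>) \<or> consistent j1 j5 (insert (Neg A) \<Gamma>)"
proof (rule ccontr)
  assume "\<not> ?thesis"
  then have "derives j1 j5 \<Gamma> (Imp A Bot)" and "derives j1 j5 \<Gamma> (Imp (Neg A) Bot)"
    unfolding consistent_def by (auto intro: derives_deduction)
  then have "derives j1 j5 \<Gamma> Bot"
    by (intro derives_taut_consequence[of "[Imp A Bot, Imp (Neg A) Bot]"]) (auto simp: taut_def)
  then show False
    using assms by (simp add: consistent_def)
qed

lemma consistent_mono: "consistent j1 j5 \<Delta> \<Longrightarrow> \<Gamma> \<subseteq> \<Delta> \<Longrightarrow> consistent j1 j5 \<Gamma>"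
  unfolding consistent_def using derives_mono by blast

lemma consistent_not_both:
  assumes "consistent j1 j5 \<Gamma>" and "derives j1 j5 \<Gamma> A" and "derives j1 j5 \<Gamma> (Neg A)"
  shows False
proof -
  have "derives j1 j5 \<Gamma> Bot"
    by (rule derives_taut_consequence[of "[A, Neg A]"]) (use assms(2,3) in \<open>auto simp: taut_def\<close>)
  then show False
    using assms(1) by (simp add: consistent_def)
qed

lemma consistent_extend_finite:
  assumes "finite X" and "consistent j1 j5 \<Gamma>"
  shows "\<exists>Q\<subseteq>X. consistent j1 j5 (\<Gamma> \<union> Q \<union> Neg ` (X - Q))"
  using assms
proof (induction X rule: finite_induct)
  case empty
  then show ?case
    by simp
next
  case (insert A X)
  then obtain Q where Q: "Q \<subseteq> X" "consistent j1 j5 (\<Gamma> \<union> Q \<union> Neg ` (X - Q))"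
    by blast
  have "\<Gamma> \<union> insert A Q \<union> Neg ` (insert A X - insert A Q) = insert A (\<Gamma> \<union> Q \<union> Neg ` (X - Q))"
    and "\<Gamma> \<union> Q \<union> Neg ` (insert A X - Q) = insert (Neg A) (\<Gamma> \<union> Q \<union> Neg ` (X - Q))"
    using Q(1) insert.hyps(2) by auto
  then show ?case
    using consistent_insert_or_insert_Neg[OF Q(2)] Q(1) by (metis insert_mono subset_insertI2)
qed

end

fun subformulas :: "fm \<Rightarrow> fm set" where
  "subformulas (Imp A B) = insert (Imp A B) (subformulas A \<union> subformulas B)"
| "subformulas (Or A B) = insert (Or A B) (subformulas A \<union> subformulas B)"
| "subformulas (And A B) = insert (And A B) (subformulas A \<union> subformulas B)"
| "subformulas (Box A) = insert (Box A) (subformulas A)"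
| "subformulas (Rhd A B) = insert (Rhd A B) (subformulas A \<union> subformulas B)"
| "subformulas A = {A}"

lemma subformulas_refl [simp]: "A \<in> subformulas A"
  by (cases A) auto

lemma finite_subformulas [simp]: "finite (subformulas A)"
  by (induction A) auto

lemma subformulas_trans: "B \<in> subformulas A \<Longrightarrow> subformulas B \<subseteq> subformulas A"
  by (induction A) auto

lemma subformulas_Neg [simp]: "subformulas (Neg A) = insert (Neg A) (insert Bot (subformulas A))"
  by (auto simp: Neg_def)

lemma subformulas_Conjs: "A \<in> set As \<Longrightarrow> A \<in> subformulas (Conjs As)"
  by (induction As) auto

lemma strict_prefix_snoc_iff: "strict_prefix xs (ys @ [y]) \<longleftrightarrow> prefix xs ys"
  by (auto simp: strict_prefix_def)

locale finite_countermodel =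
  fixes j1 j5 :: bool and A :: fm
begin

text \<open>A witness for the failure of \<open>C \<rhd> D\<close> contains \<open>C\<close> and refutes every \<open>E\<close> for which
  \<open>E \<rhd> D\<close> is known: \<open>D\<close> itself under J1, \<open>\<Diamond>D\<close> under J5, and the list \<open>Es\<close>.\<close>

definition excluded :: "fm \<Rightarrow> fm list \<Rightarrow> fm list" where
  "excluded D Es = (if j1 then [D] else []) @ (if j5 then [Dia D] else []) @ Es"

definition witness_fm :: "fm \<Rightarrow> fm \<Rightarrow> fm list \<Rightarrow> fm" where
  "witness_fm C D Es = And C (Conjs (map Neg (excluded D Es)))"

text \<open>Besides the subformulas of \<open>A\<close>, \<open>Phi\<close> contains the boxed negations whose absence from
  an atom yields the successors needed below: one satisfying a given subformula, one separating
  \<open>D'\<close> from \<open>D\<close>, and one witnessing the failure of \<open>C \<rhd> D\<close>.\<close>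

definition seeds :: "fm set" where
  "seeds = {A, Box (Neg Bot)} \<union> (\<lambda>X. Box (Neg X)) ` subformulas A
    \<union> (\<lambda>(D', D). Box (Neg (And D' (Neg D)))) ` (subformulas A \<times> subformulas A)
    \<union> (\<lambda>(C, D, Es). Box (Neg (witness_fm C D Es)))
        ` (subformulas A \<times> subformulas A \<times> {Es. set Es \<subseteq> subformulas A \<and> distinct Es})"

definition Phi :: "fm set" where
  "Phi = (\<Union>B\<in>seeds. subformulas B)"

lemma finite_Phi: "finite Phi"
  by (simp add: Phi_def seeds_def finite_subset_distinct)

lemma Phi_closed: "B \<in> Phi \<Longrightarrow> C \<in> subformulas B \<Longrightarrow> C \<in> Phi"
  unfolding Phi_def using subformulas_trans by blast

lemma seeds_Phi: "B \<in> seeds \<Longrightarrow> B \<in> Phi"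
  unfolding Phi_def using subformulas_refl[of B] by (rule UN_I[rotated])

lemma subformulas_Phi: "B \<in> subformulas A \<Longrightarrow> B \<in> Phi"
  using Phi_closed[OF seeds_Phi[of A]] by (simp add: seeds_def)

lemma Box_Neg_Phi: "X \<in> subformulas A \<Longrightarrow> Box (Neg X) \<in> Phi"
  by (rule seeds_Phi) (auto simp: seeds_def)

lemma Box_Neg_Bot_Phi: "Box (Neg Bot) \<in> Phi"
  by (rule seeds_Phi) (simp add: seeds_def)

lemma Bot_Phi: "Bot \<in> Phi"
  using Phi_closed[OF Box_Neg_Bot_Phi] by (simp add: Neg_def)

lemma Box_Neg_And_Neg_Phi:
  "D' \<in> subformulas A \<Longrightarrow> D \<in> subformulas A \<Longrightarrow> Box (Neg (And D' (Neg D))) \<in> Phi"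
  by (rule seeds_Phi) (auto simp: seeds_def intro: rev_image_eqI[of "(D', D)"])

lemma Box_Neg_witness_Phi:
  "C \<in> subformulas A \<Longrightarrow> D \<in> subformulas A \<Longrightarrow> set Es \<subseteq> subformulas A \<Longrightarrow> distinct Es
    \<Longrightarrow> Box (Neg (witness_fm C D Es)) \<in> Phi"
  by (rule seeds_Phi) (auto simp: seeds_def intro: rev_image_eqI[of "(C, D, Es)"])

text \<open>An atom is a maximal consistent subset of \<open>Phi\<close>, represented by its positive part.\<close>

definition literals :: "fm set \<Rightarrow> fm set" where
  "literals Q = Q \<union> Neg ` (Phi - Q)"

definition atom :: "fm set \<Rightarrow> bool" where
  "atom Q \<longleftrightarrow> Q \<subseteq> Phi \<and> consistent j1 j5 (literals Q)"

lemma derives_literals_mem: "B \<in> Q \<Longrightarrow> derives j1 j5 (literals Q) B"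
  by (simp add: derives_mem literals_def)

lemma derives_literals_not_mem: "B \<in> Phi \<Longrightarrow> B \<notin> Q \<Longrightarrow> derives j1 j5 (literals Q) (Neg B)"
  by (simp add: derives_mem literals_def)

lemma atom_derives_iff: "atom Q \<Longrightarrow> B \<in> Phi \<Longrightarrow> derives j1 j5 (literals Q) B \<longleftrightarrow> B \<in> Q"
  using consistent_not_both derives_literals_mem derives_literals_not_mem atom_def by blast

lemma atom_derives_Neg_iff:
  "atom Q \<Longrightarrow> B \<in> Phi \<Longrightarrow> derives j1 j5 (literals Q) (Neg B) \<longleftrightarrow> B \<notin> Q"
  using consistent_not_both derives_literals_mem derives_literals_not_mem atom_def by blast

lemma atom_taut_closed:
  assumes "atom Q" and "B \<in> Phi" and "taut (Imp (Conjs As) B)"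
    and "\<forall>A\<in>set As. derives j1 j5 (literals Q) A"
  shows "B \<in> Q"
  using derives_taut_consequence[OF assms(3,4)] atom_derives_iff[OF assms(1,2)] by blast

lemma atom_Neg_iff:
  assumes "atom Q" and "Neg B \<in> Phi"
  shows "Neg B \<in> Q \<longleftrightarrow> B \<notin> Q"
proof -
  have "B \<in> Phi"
    using Phi_closed[OF assms(2)] by (simp add: Neg_def)
  then show ?thesis
    using atom_derives_iff[OF assms] atom_derives_Neg_iff[OF assms(1)] by simp
qed

lemma atom_Bot: "atom Q \<Longrightarrow> Bot \<notin> Q"
  using atom_derives_iff[OF _ Bot_Phi] by (simp add: atom_def consistent_def)

lemma atom_prov: "atom Q \<Longrightarrow> B \<in> Phi \<Longrightarrow> prov j1 j5 B \<Longrightarrow> B \<in> Q"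
  using atom_derives_iff derives_prov by blast

lemma atom_Imp:
  assumes Q: "atom Q" and "Imp B C \<in> Phi"
  shows "Imp B C \<in> Q \<longleftrightarrow> (B \<in> Q \<longrightarrow> C \<in> Q)"
proof -
  have "B \<in> Phi" and "C \<in> Phi"
    using Phi_closed[OF assms(2)] by auto
  show ?thesis
  proof (intro iffI impI)
    assume "Imp B C \<in> Q" and "B \<in> Q"
    then show "C \<in> Q"
      by (intro atom_taut_closed[OF Q \<open>C \<in> Phi\<close>, of "[Imp B C, B]"])
        (auto simp: taut_def intro: derives_literals_mem)
  next
    assume "B \<in> Q \<longrightarrow> C \<in> Q"
    then have "derives j1 j5 (literals Q) (Neg B) \<or> derives j1 j5 (literals Q) C"
      using derives_literals_mem derives_literals_not_mem[OF \<open>B \<in> Phi\<close>] by blast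
    then show "Imp B C \<in> Q"
      using atom_taut_closed[OF Q assms(2), of "[Neg B]"] atom_taut_closed[OF Q assms(2), of "[C]"]
      by (auto simp: taut_def)
  qed
qed

lemma atom_And:
  assumes Q: "atom Q" and "And B C \<in> Phi"
  shows "And B C \<in> Q \<longleftrightarrow> B \<in> Q \<and> C \<in> Q"
proof -
  have "B \<in> Phi" and "C \<in> Phi"
    using Phi_closed[OF assms(2)] by auto
  show ?thesis
  proof
    assume "And B C \<in> Q"
    then show "B \<in> Q \<and> C \<in> Q"
      using atom_taut_closed[OF Q \<open>B \<in> Phi\<close>, of "[And B C]"]
        atom_taut_closed[OF Q \<open>C \<in> Phi\<close>, of "[And B C]"] derives_literals_mem
      by (auto simp: taut_def)
  next
    assume "B \<in> Q \<and> C \<in> Q"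
    then show "And B C \<in> Q"
      by (intro atom_taut_closed[OF Q assms(2), of "[B, C]"])
        (auto simp: taut_def intro: derives_literals_mem)
  qed
qed

lemma atom_Or:
  assumes Q: "atom Q" and "Or B C \<in> Phi"
  shows "Or B C \<in> Q \<longleftrightarrow> B \<in> Q \<or> C \<in> Q"
proof -
  have "B \<in> Phi" and "C \<in> Phi"
    using Phi_closed[OF assms(2)] by auto
  show ?thesis
  proof
    assume "Or B C \<in> Q"
    then show "B \<in> Q \<or> C \<in> Q"
      using atom_taut_closed[OF Q \<open>C \<in> Phi\<close>, of "[Or B C, Neg B]"]
        derives_literals_mem derives_literals_not_mem[OF \<open>B \<in> Phi\<close>]
      by (auto simp: taut_def)
  next
    assume "B \<in> Q \<or> C \<in> Q"
    then show "Or B C \<in> Q"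
      using atom_taut_closed[OF Q assms(2), of "[B]"] atom_taut_closed[OF Q assms(2), of "[C]"]
        derives_literals_mem
      by (auto simp: taut_def)
  qed
qed

lemma atom_lindenbaum:
  assumes "consistent j1 j5 \<Gamma>"
  shows "\<exists>Q. atom Q \<and> consistent j1 j5 (\<Gamma> \<union> literals Q)"
proof -
  obtain Q where "Q \<subseteq> Phi" and "consistent j1 j5 (\<Gamma> \<union> literals Q)"
    using consistent_extend_finite[OF finite_Phi assms] by (auto simp: literals_def Un_assoc)
  moreover from this have "consistent j1 j5 (literals Q)"
    using consistent_mono by blast
  ultimately show ?thesis
    unfolding atom_def by blast
qed

lemma consistent_literals_mem:
  assumes "consistent j1 j5 (\<Gamma> \<union> literals Q)" and "B \<in> Phi" and "B \<in> \<Gamma>"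
  shows "B \<in> Q"
proof (rule ccontr)
  assume "B \<notin> Q"
  then have "Neg B \<in> \<Gamma> \<union> literals Q"
    using assms(2) by (simp add: literals_def)
  then show False
    using consistent_not_both[OF assms(1) derives_mem derives_mem] assms(3) by blast
qed

lemma consistent_literals_not_mem:
  assumes "consistent j1 j5 (\<Gamma> \<union> literals Q)" and "Neg B \<in> \<Gamma>"
  shows "B \<notin> Q"
proof
  assume "B \<in> Q"
  then have "B \<in> \<Gamma> \<union> literals Q"
    by (simp add: literals_def)
  then show False
    using consistent_not_both[OF assms(1) derives_mem derives_mem] assms(2) by blast
qed

definition prec :: "fm set \<Rightarrow> fm set \<Rightarrow> bool" where
  "prec P Q \<longleftrightarrow> (\<forall>X. Box X \<in> P \<longrightarrow> X \<in> Q \<and> Box X \<in> Q) \<and> (\<exists>X. Box X \<in> Q \<and> Box X \<notin> P)"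

lemma prec_trans: "prec P Q \<Longrightarrow> prec Q T \<Longrightarrow> prec P T"
  unfolding prec_def by blast

text \<open>If the seed were inconsistent, the boxes of \<open>P\<close> would derive \<open>\<Box>(\<Box>B \<rightarrow> B)\<close>, hence \<open>\<Box>B\<close> by L.\<close>

lemma consistent_Box_successor_seed:
  assumes P: "atom P" and "Box B \<in> Phi" and "Box B \<notin> P"
  shows "consistent j1 j5 (insert (Neg B) (insert (Box B) ({X. Box X \<in> P} \<union> Box ` {X. Box X \<in> P})))"
    (is "consistent j1 j5 (insert _ (insert _ ?\<Gamma>))")
  unfolding consistent_def
proof
  assume "derives j1 j5 (insert (Neg B) (insert (Box B) ?\<Gamma>)) Bot"
  then have "derives j1 j5 ?\<Gamma> (Imp (Box B) (Imp (Neg B) Bot))"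
    by (intro derives_deduction)
  then have "derives j1 j5 ?\<Gamma> (Imp (Box B) B)"
    by (intro derives_taut_consequence[of "[Imp (Box B) (Imp (Neg B) Bot)]"]) (auto simp: taut_def)
  then have Box_B: "derives j1 j5 (Box ` ?\<Gamma>) (Box B)"
    using derives_Box ax_L derives_prov_mp by blast
  have "\<forall>C\<in>Box ` ?\<Gamma>. derives j1 j5 (literals P) C"
  proof
    fix C
    assume "C \<in> Box ` ?\<Gamma>"
    then obtain X where "Box X \<in> P" and "C = Box X \<or> C = Box (Box X)"
      by blast
    moreover note derives_literals_mem[OF \<open>Box X \<in> P\<close>]
    ultimately show "derives j1 j5 (literals P) C"
      using derives_prov_mp[OF _ prov_Box_Box] by auto
  qed
  then have "derives j1 j5 (literals P) (Box B)"
    using Box_B by (rule derives_cut)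
  then show False
    using atom_derives_iff[OF P assms(2)] assms(3) by simp
qed

lemma atom_Box_successor:
  assumes P: "atom P" and "Box B \<in> Phi" and "Box B \<notin> P"
  shows "\<exists>Q. atom Q \<and> prec P Q \<and> B \<notin> Q"
proof -
  let ?Bs = "{X. Box X \<in> P}"
  obtain Q where "atom Q"
    and cons: "consistent j1 j5 (insert (Neg B) (insert (Box B) (?Bs \<union> Box ` ?Bs)) \<union> literals Q)"
    using atom_lindenbaum[OF consistent_Box_successor_seed[OF assms]] by blast
  have "B \<notin> Q"
    using consistent_literals_not_mem[OF cons] by simp
  moreover have "Box B \<in> Q"
    using consistent_literals_mem[OF cons assms(2)] by simp
  moreover have "X \<in> Q \<and> Box X \<in> Q" if "Box X \<in> P" for X
  proof -
    have "Box X \<in> Phi" and "X \<in> Phi"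
      using that P Phi_closed[of "Box X" X] by (auto simp: atom_def)
    then show ?thesis
      using that consistent_literals_mem[OF cons] by simp
  qed
  ultimately show ?thesis
    unfolding prec_def using assms(3) \<open>atom Q\<close> by blast
qed

lemma atom_Dia_successor:
  assumes "atom P" and "Box (Neg B) \<in> Phi" and "Box (Neg B) \<notin> P"
  shows "\<exists>Q. atom Q \<and> prec P Q \<and> B \<in> Q"
proof -
  obtain Q where "atom Q" and "prec P Q" and "Neg B \<notin> Q"
    using atom_Box_successor[OF assms] by blast
  moreover have "Neg B \<in> Phi"
    using Phi_closed[OF assms(2)] by simp
  ultimately show ?thesis
    using atom_Neg_iff by blast
qed

lemma Rhd_mem_successor:
  assumes P: "atom P" and G: "atom G" "prec P G"
    and "Rhd C D \<in> subformulas A" and "Rhd C D \<in> P" and "C \<in> G"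
  shows "\<exists>T. atom T \<and> prec P T \<and> D \<in> T"
proof -
  have C: "C \<in> subformulas A" and D: "D \<in> subformulas A"
    using subformulas_trans[OF assms(4)] by auto
  have "Box (Neg D) \<notin> P"
  proof
    assume "Box (Neg D) \<in> P"
    then have "derives j1 j5 (literals P) (Box (Neg C))"
      using derives_prov[OF prov_Box_Neg_Rhd, THEN derives_mp, THEN derives_mp]
        derives_literals_mem \<open>Rhd C D \<in> P\<close> by blast
    then have "Box (Neg C) \<in> P"
      using atom_derives_iff[OF P Box_Neg_Phi[OF C]] by simp
    then have "Neg C \<in> G"
      using G(2) by (simp add: prec_def)
    moreover have "Neg C \<in> Phi"
      using Phi_closed[OF Box_Neg_Phi[OF C]] by simp
    ultimately show False
      using atom_Neg_iff[OF G(1)] \<open>C \<in> G\<close> by blast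
  qed
  then show ?thesis
    using atom_Dia_successor[OF P Box_Neg_Phi[OF D]] by blast
qed

lemma separating_successor:
  assumes P: "atom P" and "D' \<in> subformulas A" and "D \<in> subformulas A"
    and "Box (Neg (And D' (Neg D))) \<notin> P"
  shows "\<exists>T. atom T \<and> prec P T \<and> D' \<in> T \<and> D \<notin> T"
proof -
  have Phi: "Box (Neg (And D' (Neg D))) \<in> Phi"
    using Box_Neg_And_Neg_Phi[OF assms(2,3)] .
  then obtain T where "atom T" and "prec P T" and "And D' (Neg D) \<in> T"
    using atom_Dia_successor[OF P _ assms(4)] by blast
  moreover have "And D' (Neg D) \<in> Phi" and "Neg D \<in> Phi"
    using Phi_closed[OF Phi] by auto
  ultimately show ?thesis
    using atom_And atom_Neg_iff by blast
qed

lemma derives_Rhd_excluded: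
  assumes "E \<in> set (excluded D Es)"
    and "\<forall>E\<in>set Es. \<exists>D'. Rhd E D' \<in> \<Gamma> \<and> Box (Neg (And D' (Neg D))) \<in> \<Gamma>"
  shows "derives j1 j5 \<Gamma> (Rhd E D)"
proof -
  consider "j1" "E = D" | "j5" "E = Dia D" | "E \<in> set Es"
    using assms(1) by (auto simp: excluded_def split: if_splits)
  then show ?thesis
  proof cases
    case 1
    have "prov j1 j5 (Box (Imp D D))"
      by (intro nec ax_taut) (simp add: taut_def)
    then show ?thesis
      using 1 ax_J1 mp derives_prov by blast
  next
    case 2
    then show ?thesis
      using ax_J5 derives_prov by blast
  next
    case 3
    then obtain D' where "Rhd E D' \<in> \<Gamma>" and "Box (Neg (And D' (Neg D))) \<in> \<Gamma>"
      using assms(2) by blast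
    have "prov j1 j5 (Imp (Box (Neg (And D' (Neg D)))) (Box (Imp D' D)))"
      by (intro prov_Box_mono ax_taut) (simp add: taut_def)
    then have "derives j1 j5 \<Gamma> (Box (Imp D' D))"
      using derives_prov_mp[OF derives_mem[OF \<open>Box (Neg (And D' (Neg D))) \<in> \<Gamma>\<close>]] by blast
    then have "derives j1 j5 \<Gamma> (Imp (Rhd E D') (Rhd E D))"
      using derives_mp[OF derives_prov[OF ax_J4p]] by blast
    then show ?thesis
      using derives_mp derives_mem[OF \<open>Rhd E D' \<in> \<Gamma>\<close>] by blast
  qed
qed

lemma Box_Neg_witness_not_mem:
  assumes P: "atom P" and "Rhd C D \<in> subformulas A" and "Rhd C D \<notin> P"
    and Es: "\<forall>E\<in>set Es. \<exists>D'. Rhd E D' \<in> P \<and> Box (Neg (And D' (Neg D))) \<in> P"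
  shows "Box (Neg (witness_fm C D Es)) \<notin> P"
proof
  assume "Box (Neg (witness_fm C D Es)) \<in> P"
  moreover have "prov j1 j5 (Imp (Box (Neg (witness_fm C D Es))) (Box (Imp C (Disjs (excluded D Es)))))"
    by (intro prov_Box_mono ax_taut) (auto simp: taut_def witness_fm_def)
  ultimately have "derives j1 j5 (literals P) (Box (Imp C (Disjs (excluded D Es))))"
    using derives_prov_mp derives_literals_mem by blast
  moreover have "derives j1 j5 (literals P) (Rhd (Disjs (excluded D Es)) D)"
  proof (rule derives_Rhd_Disjs, rule ballI)
    fix E
    assume "E \<in> set (excluded D Es)"
    moreover have "P \<subseteq> literals P"
      by (simp add: literals_def)
    ultimately show "derives j1 j5 (literals P) (Rhd E D)"
      using derives_Rhd_excluded Es by (meson subsetD)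
  qed
  ultimately have "derives j1 j5 (literals P) (Rhd C D)"
    using derives_mp[OF derives_mp[OF derives_prov[OF prov_Box_Rhd_antimono]]] by blast
  then show False
    using atom_derives_iff[OF P subformulas_Phi[OF assms(2)]] assms(3) by simp
qed

lemma witness_fm_mem:
  assumes G: "atom G" and "witness_fm C D Es \<in> G" and Phi: "witness_fm C D Es \<in> Phi"
  shows "C \<in> G" and "E \<in> set (excluded D Es) \<Longrightarrow> E \<in> Phi \<and> E \<notin> G"
proof -
  have w: "derives j1 j5 (literals G) (witness_fm C D Es)"
    using assms(2) by (rule derives_literals_mem)
  have "C \<in> Phi"
    using Phi_closed[OF Phi] by (simp add: witness_fm_def)
  then show "C \<in> G"
    using atom_taut_closed[OF G _ _, of C "[witness_fm C D Es]"] w by (simp add: taut_def witness_fm_def)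
  assume E: "E \<in> set (excluded D Es)"
  have "Neg E \<in> subformulas (witness_fm C D Es)"
    using subformulas_Conjs[of "Neg E" "map Neg (excluded D Es)"] E by (simp add: witness_fm_def)
  then have "E \<in> Phi"
    using Phi_closed[OF Phi] Phi_closed[of "Neg E" E] by (simp add: Neg_def)
  moreover have "derives j1 j5 (literals G) (Neg E)"
    using derives_taut_consequence[of "[witness_fm C D Es]"] w E by (simp add: taut_def witness_fm_def)
  ultimately show "E \<in> Phi \<and> E \<notin> G"
    using atom_derives_Neg_iff[OF G] by blast
qed

text \<open>A child \<open>G\<close> of \<open>P\<close> with label \<open>D\<close> must not be \<open>S\<close>-related to worlds above \<open>P\<close> that
  contain \<open>D\<close>; the last clause supplies, for each \<open>C' \<rhd> D' \<in> P\<close> with \<open>C' \<in> G\<close>, an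
  \<open>S\<close>-successor of \<open>G\<close> satisfying \<open>D'\<close> that is still allowed.\<close>

definition good_child :: "fm set \<Rightarrow> fm set \<Rightarrow> fm \<Rightarrow> bool" where
  "good_child P G D \<longleftrightarrow> atom G \<and> prec P G \<and> D \<in> Phi \<and> (j1 \<longrightarrow> D \<notin> G) \<and> (j5 \<longrightarrow> Box (Neg D) \<in> G)
    \<and> (\<forall>C' D'. Rhd C' D' \<in> subformulas A \<longrightarrow> Rhd C' D' \<in> P \<longrightarrow> C' \<in> G
          \<longrightarrow> (\<exists>T. atom T \<and> prec P T \<and> D' \<in> T \<and> D \<notin> T))"

lemma good_child_Bot:
  assumes P: "atom P" and "atom T" and "prec P T"
  shows "good_child P T Bot"
proof -
  have "prov j1 j5 (Box (Neg Bot))"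
    by (intro nec ax_taut) (simp add: taut_def)
  then have "Box (Neg Bot) \<in> T"
    using atom_prov[OF \<open>atom T\<close> Box_Neg_Bot_Phi] by blast
  moreover have "\<exists>T'. atom T' \<and> prec P T' \<and> D' \<in> T' \<and> Bot \<notin> T'"
    if "Rhd C' D' \<in> subformulas A" "Rhd C' D' \<in> P" "C' \<in> T" for C' D'
    using Rhd_mem_successor[OF P \<open>atom T\<close> \<open>prec P T\<close> that] atom_Bot by blast
  ultimately show ?thesis
    unfolding good_child_def using assms Bot_Phi atom_Bot by blast
qed

lemma Rhd_not_mem_good_child:
  assumes P: "atom P" and "Rhd C D \<in> subformulas A" and "Rhd C D \<notin> P"
  shows "\<exists>G. good_child P G D \<and> C \<in> G"
proof -
  have C: "C \<in> subformulas A" and D: "D \<in> subformulas A"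
    using subformulas_trans[OF assms(2)] by auto
  define Bad where "Bad = {E \<in> subformulas A. \<exists>D'. Rhd E D' \<in> subformulas A \<and> Rhd E D' \<in> P
    \<and> Box (Neg (And D' (Neg D))) \<in> P}"
  obtain Es where Es: "set Es = Bad" "distinct Es"
    using finite_distinct_list[of Bad] by (auto simp: Bad_def)
  have Phi: "Box (Neg (witness_fm C D Es)) \<in> Phi"
    using Box_Neg_witness_Phi[OF C D _ Es(2)] Es(1) by (auto simp: Bad_def)
  moreover have "\<forall>E\<in>set Es. \<exists>D'. Rhd E D' \<in> P \<and> Box (Neg (And D' (Neg D))) \<in> P"
    using Es(1) by (auto simp: Bad_def)
  then have "Box (Neg (witness_fm C D Es)) \<notin> P"
    by (rule Box_Neg_witness_not_mem[OF assms])
  ultimately obtain G where G: "atom G" "prec P G" "witness_fm C D Es \<in> G"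
    using atom_Dia_successor[OF P] by blast
  have "witness_fm C D Es \<in> Phi"
    using Phi_closed[OF Phi] by simp
  note witness = witness_fm_mem[OF G(1,3) this]
  have "j1 \<longrightarrow> D \<notin> G"
    using witness(2)[of D] by (simp add: excluded_def)
  moreover have "j5 \<longrightarrow> Box (Neg D) \<in> G"
    using witness(2)[of "Dia D"] atom_Neg_iff[OF G(1)] by (auto simp: excluded_def Dia_def)
  moreover have "\<exists>T. atom T \<and> prec P T \<and> D' \<in> T \<and> D \<notin> T"
    if "Rhd C' D' \<in> subformulas A" "Rhd C' D' \<in> P" "C' \<in> G" for C' D'
  proof -
    have "C' \<notin> set Es"
      using witness(2) \<open>C' \<in> G\<close> by (auto simp: excluded_def)
    moreover have "C' \<in> subformulas A" and "D' \<in> subformulas A"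
      using subformulas_trans[OF that(1)] by auto
    ultimately have "Box (Neg (And D' (Neg D))) \<notin> P"
      using that Es(1) by (auto simp: Bad_def)
    then show ?thesis
      using separating_successor[OF P \<open>D' \<in> subformulas A\<close> D] by blast
  qed
  ultimately show ?thesis
    unfolding good_child_def using G(1,2) witness(1) subformulas_Phi[OF D] by blast
qed

abbreviation atom_of :: "(fm set \<times> fm) list \<Rightarrow> fm set" where
  "atom_of xs \<equiv> fst (last xs)"

abbreviation label :: "(fm set \<times> fm) list \<Rightarrow> fm" where
  "label xs \<equiv> snd (last xs)"

inductive_set W_fin :: "(fm set \<times> fm) list set" where
  root: "atom G \<Longrightarrow> [(G, Bot)] \<in> W_fin"
| child: "xs \<in> W_fin \<Longrightarrow> good_child (atom_of xs) G D \<Longrightarrow> xs @ [(G, D)] \<in> W_fin"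

definition R_fin :: "(fm set \<times> fm) list \<Rightarrow> (fm set \<times> fm) list \<Rightarrow> bool" where
  "R_fin xs ys \<longleftrightarrow> xs \<in> W_fin \<and> ys \<in> W_fin \<and> strict_prefix xs ys"

text \<open>For the root, whose parent is \<open>[]\<close>, the condition is vacuous: its label \<open>Bot\<close> lies in
  no atom.\<close>

definition S_fin :: "(fm set \<times> fm) list \<Rightarrow> (fm set \<times> fm) list \<Rightarrow> bool" where
  "S_fin ys zs \<longleftrightarrow> ys \<in> W_fin \<and> zs \<in> W_fin
    \<and> (strict_prefix (butlast ys) zs \<longrightarrow> label ys \<notin> atom_of zs)"

definition V_fin :: "(fm set \<times> fm) list \<Rightarrow> nat \<Rightarrow> bool" where
  "V_fin xs n \<longleftrightarrow> Var n \<in> atom_of xs"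

lemma W_fin_atom: "xs \<in> W_fin \<Longrightarrow> xs \<noteq> [] \<and> atom (atom_of xs)"
  by (induction rule: W_fin.induct) (auto simp: good_child_def)

lemma W_fin_cases:
  assumes "xs \<in> W_fin"
  obtains G where "xs = [(G, Bot)]" and "atom G"
  | ps G D where "xs = ps @ [(G, D)]" and "ps \<in> W_fin" and "good_child (atom_of ps) G D"
  using assms by (cases rule: W_fin.cases) auto

lemma W_fin_prec:
  assumes "xs \<in> W_fin" and "strict_prefix ys xs" and "ys \<noteq> []"
  shows "prec (atom_of ys) (atom_of xs)"
  using assms
proof (induction arbitrary: ys rule: W_fin.induct)
  case (root G)
  then show ?case
    by (simp add: strict_prefix_def prefix_Cons)
next
  case (child xs G D)
  then have "prefix ys xs" and "prec (atom_of xs) G"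
    by (auto simp: strict_prefix_snoc_iff good_child_def)
  then show ?case
    using child.IH child.prems(2) prec_trans by (cases "ys = xs") (auto simp: strict_prefix_def)
qed

lemma R_fin_prec: "R_fin xs ys \<Longrightarrow> prec (atom_of xs) (atom_of ys)"
  unfolding R_fin_def using W_fin_prec W_fin_atom by blast

lemma R_fin_child:
  assumes "xs \<in> W_fin" and "good_child (atom_of xs) G D"
  shows "R_fin xs (xs @ [(G, D)])"
  using assms W_fin.child by (simp add: R_fin_def strict_prefix_snoc_iff)

lemma W_fin_length: "xs \<in> W_fin \<Longrightarrow> length xs \<le> card (atom_of xs \<inter> range Box) + 1"
proof (induction rule: W_fin.induct)
  case (child xs G D)
  have "atom_of xs \<inter> range Box \<subset> G \<inter> range Box"
    using child.hyps(2) unfolding good_child_def prec_def by blast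
  moreover have "finite (G \<inter> range Box)"
    using child.hyps(2) finite_Phi by (auto simp: good_child_def atom_def intro: finite_subset)
  ultimately have "card (atom_of xs \<inter> range Box) < card (G \<inter> range Box)"
    by (rule psubset_card_mono[rotated])
  then show ?case
    using child.IH by simp
qed simp

lemma W_fin_length_Phi: "xs \<in> W_fin \<Longrightarrow> length xs \<le> card Phi + 1"
proof -
  assume "xs \<in> W_fin"
  then have "atom_of xs \<inter> range Box \<subseteq> Phi"
    using W_fin_atom by (auto simp: atom_def)
  then have "card (atom_of xs \<inter> range Box) \<le> card Phi"
    by (rule card_mono[OF finite_Phi])
  then show ?thesis
    using W_fin_length[OF \<open>xs \<in> W_fin\<close>] by linarith
qed

lemma finite_W_fin: "finite W_fin"
proof (rule finite_subset)
  show "W_fin \<subseteq> {xs. set xs \<subseteq> Pow Phi \<times> Phi \<and> length xs \<le> card Phi + 1}"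
  proof
    fix xs
    assume "xs \<in> W_fin"
    moreover from this have "set xs \<subseteq> Pow Phi \<times> Phi"
      by (induction rule: W_fin.induct) (auto simp: good_child_def atom_def Bot_Phi)
    ultimately show "xs \<in> {xs. set xs \<subseteq> Pow Phi \<times> Phi \<and> length xs \<le> card Phi + 1}"
      using W_fin_length_Phi by blast
  qed
  show "finite {xs. set xs \<subseteq> Pow Phi \<times> Phi \<and> length xs \<le> card Phi + 1}"
    by (rule finite_lists_length_le) (simp add: finite_Phi)
qed

lemma forces_Box_iff:
  assumes IH: "\<And>ys. ys \<in> W_fin \<Longrightarrow> forces R_fin S_fin V_fin ys B \<longleftrightarrow> B \<in> atom_of ys"
    and "Box B \<in> subformulas A" and "xs \<in> W_fin"
  shows "forces R_fin S_fin V_fin xs (Box B) \<longleftrightarrow> Box B \<in> atom_of xs"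
proof
  assume forces: "forces R_fin S_fin V_fin xs (Box B)"
  show "Box B \<in> atom_of xs"
  proof (rule ccontr)
    assume "Box B \<notin> atom_of xs"
    moreover have P: "atom (atom_of xs)"
      using W_fin_atom[OF assms(3)] by blast
    ultimately obtain T where "atom T" and "prec (atom_of xs) T" and "B \<notin> T"
      using atom_Box_successor subformulas_Phi[OF assms(2)] by blast
    then have R: "R_fin xs (xs @ [(T, Bot)])"
      using R_fin_child[OF assms(3) good_child_Bot[OF P]] by blast
    then have "forces R_fin S_fin V_fin (xs @ [(T, Bot)]) B"
      using forces by simp
    then show False
      using IH[of "xs @ [(T, Bot)]"] R \<open>B \<notin> T\<close> by (simp add: R_fin_def)
  qed
next
  assume "Box B \<in> atom_of xs"
  then have "B \<in> atom_of ys" if "R_fin xs ys" for ys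
    using R_fin_prec[OF that] by (simp add: prec_def)
  then show "forces R_fin S_fin V_fin xs (Box B)"
    using IH by (simp add: R_fin_def)
qed

lemma forces_Rhd_imp_mem:
  assumes IH_C: "\<And>ys. ys \<in> W_fin \<Longrightarrow> forces R_fin S_fin V_fin ys C \<longleftrightarrow> C \<in> atom_of ys"
    and IH_D: "\<And>ys. ys \<in> W_fin \<Longrightarrow> forces R_fin S_fin V_fin ys D \<longleftrightarrow> D \<in> atom_of ys"
    and "Rhd C D \<in> subformulas A" and "xs \<in> W_fin"
    and forces: "forces R_fin S_fin V_fin xs (Rhd C D)"
  shows "Rhd C D \<in> atom_of xs"
proof (rule ccontr)
  assume "Rhd C D \<notin> atom_of xs"
  then obtain G where good: "good_child (atom_of xs) G D" and "C \<in> G"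
    using Rhd_not_mem_good_child W_fin_atom[OF assms(4)] assms(3) by blast
  let ?ys = "xs @ [(G, D)]"
  have R: "R_fin xs ?ys"
    using R_fin_child[OF assms(4) good] .
  then have "forces R_fin S_fin V_fin ?ys C"
    using IH_C \<open>C \<in> G\<close> by (simp add: R_fin_def)
  then obtain zs where "R_fin xs zs" and "S_fin ?ys zs" and "forces R_fin S_fin V_fin zs D"
    using forces R unfolding forces.simps(8) by blast
  then have "D \<in> atom_of zs"
    using IH_D by (simp add: R_fin_def)
  moreover have "D \<notin> atom_of zs"
    using \<open>S_fin ?ys zs\<close> \<open>R_fin xs zs\<close> by (simp add: S_fin_def R_fin_def)
  ultimately show False
    by contradiction
qed

text \<open>A child \<open>ys\<close> of \<open>xs\<close> gets its \<open>S\<close>-successor from the last clause of \<open>good_child\<close>;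
  for a deeper \<open>ys\<close>, a new child of \<open>xs\<close> is not above the parent of \<open>ys\<close>, so any atom
  containing \<open>D\<close> will do.\<close>

lemma mem_Rhd_imp_forces:
  assumes IH_C: "\<And>ys. ys \<in> W_fin \<Longrightarrow> forces R_fin S_fin V_fin ys C \<longleftrightarrow> C \<in> atom_of ys"
    and IH_D: "\<And>ys. ys \<in> W_fin \<Longrightarrow> forces R_fin S_fin V_fin ys D \<longleftrightarrow> D \<in> atom_of ys"
    and "Rhd C D \<in> subformulas A" and "xs \<in> W_fin" and "Rhd C D \<in> atom_of xs"
  shows "forces R_fin S_fin V_fin xs (Rhd C D)"
proof (intro forces.simps(8)[THEN iffD2] allI impI, elim conjE)
  fix ys
  assume "R_fin xs ys" and "forces R_fin S_fin V_fin ys C"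
  then have "ys \<in> W_fin" and "C \<in> atom_of ys"
    using IH_C by (auto simp: R_fin_def)
  have P: "atom (atom_of xs)" and "xs \<noteq> []"
    using W_fin_atom[OF assms(4)] by auto
  from \<open>ys \<in> W_fin\<close> obtain ps G D' where ys: "ys = ps @ [(G, D')]"
    and good: "good_child (atom_of ps) G D'"
  proof (cases rule: W_fin_cases)
    case (1 G)
    then show ?thesis
      using \<open>R_fin xs ys\<close> \<open>xs \<noteq> []\<close> strict_prefix_snoc_iff[of xs "[]"] by (simp add: R_fin_def)
  qed blast
  have "prefix xs ps"
    using \<open>R_fin xs ys\<close> by (simp add: R_fin_def ys strict_prefix_snoc_iff)
  obtain T where "atom T" and "prec (atom_of xs) T" and "D \<in> T" and "ps = xs \<longrightarrow> D' \<notin> T"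
  proof (cases "ps = xs")
    case True
    then show ?thesis
      using good assms(3,5) \<open>C \<in> atom_of ys\<close> that unfolding good_child_def ys by auto
  next
    case False
    then show ?thesis
      using Rhd_mem_successor[OF P _ R_fin_prec[OF \<open>R_fin xs ys\<close>] assms(3,5) \<open>C \<in> atom_of ys\<close>]
        W_fin_atom[OF \<open>ys \<in> W_fin\<close>] that by blast
  qed
  let ?zs = "xs @ [(T, Bot)]"
  have R: "R_fin xs ?zs"
    using R_fin_child[OF assms(4) good_child_Bot[OF P \<open>atom T\<close> \<open>prec (atom_of xs) T\<close>]] .
  moreover have "S_fin ys ?zs"
    using R \<open>ys \<in> W_fin\<close> \<open>prefix xs ps\<close> \<open>ps = xs \<longrightarrow> D' \<notin> T\<close> prefix_order.antisym
    by (auto simp: S_fin_def R_fin_def ys strict_prefix_snoc_iff)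
  moreover have "forces R_fin S_fin V_fin ?zs D"
    using IH_D R \<open>D \<in> T\<close> by (simp add: R_fin_def)
  ultimately show "\<exists>zs. R_fin xs zs \<and> S_fin ys zs \<and> forces R_fin S_fin V_fin zs D"
    by blast
qed

lemma truth_lemma:
  "B \<in> subformulas A \<Longrightarrow> xs \<in> W_fin \<Longrightarrow> forces R_fin S_fin V_fin xs B \<longleftrightarrow> B \<in> atom_of xs"
proof (induction B arbitrary: xs)
  case Top
  have "prov j1 j5 Top"
    by (rule ax_taut) (simp add: taut_def)
  then show ?case
    using atom_prov W_fin_atom[OF Top(2)] subformulas_Phi[OF Top(1)] by simp
next
  case Bot
  then show ?case
    using atom_Bot W_fin_atom by simp
next
  case (Imp B C)
  then have "B \<in> subformulas A" and "C \<in> subformulas A"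
    using subformulas_trans[OF Imp.prems(1)] by auto
  then show ?case
    using Imp atom_Imp[OF conjunct2[OF W_fin_atom] subformulas_Phi] by simp
next
  case (Or B C)
  then have "B \<in> subformulas A" and "C \<in> subformulas A"
    using subformulas_trans[OF Or.prems(1)] by auto
  then show ?case
    using Or atom_Or[OF conjunct2[OF W_fin_atom] subformulas_Phi] by simp
next
  case (And B C)
  then have "B \<in> subformulas A" and "C \<in> subformulas A"
    using subformulas_trans[OF And.prems(1)] by auto
  then show ?case
    using And atom_And[OF conjunct2[OF W_fin_atom] subformulas_Phi] by simp
next
  case (Box B)
  then have "B \<in> subformulas A"
    using subformulas_trans[OF Box.prems(1)] by auto
  then show ?case
    using forces_Box_iff[OF Box.IH] Box.prems by blast
next
  case (Rhd C D)
  then have "C \<in> subformulas A" and "D \<in> subformulas A"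
    using subformulas_trans[OF Rhd.prems(1)] by auto
  then show ?case
    using forces_Rhd_imp_mem[OF Rhd.IH] mem_Rhd_imp_forces[OF Rhd.IH] Rhd.prems by blast
qed (simp add: V_fin_def)

lemma L_frame_fin:
  assumes "W_fin \<noteq> {}"
  shows "L_frame j1 j5 W_fin R_fin S_fin"
proof -
  have "transp R_fin"
    unfolding R_fin_def transp_def using prefix_order.less_trans by blast
  moreover have "wfp (\<lambda>xs ys. R_fin ys xs)"
  proof (rule wfp_if_convertible_to_nat[where f = "\<lambda>xs. card Phi + 2 - length xs"])
    fix xs ys
    assume "R_fin ys xs"
    then have "length ys < length xs" and "length xs \<le> card Phi + 1"
      using prefix_length_less W_fin_length_Phi by (auto simp: R_fin_def)
    then show "card Phi + 2 - length xs < card Phi + 2 - length ys"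
      by linarith
  qed
  moreover have "S_fin xs xs" if "j1" and "xs \<in> W_fin" for xs
    using \<open>xs \<in> W_fin\<close>
  proof (cases rule: W_fin_cases)
    case (1 G)
    then show ?thesis
      using \<open>xs \<in> W_fin\<close> atom_Bot by (simp add: S_fin_def)
  next
    case (2 ps G D)
    then have "D \<notin> G"
      using \<open>j1\<close> unfolding good_child_def by blast
    then show ?thesis
      using 2(1) \<open>xs \<in> W_fin\<close> by (simp add: S_fin_def)
  qed
  moreover have "S_fin xs ys" if "j5" and "R_fin xs ys" for xs ys
  proof -
    have "xs \<in> W_fin" and "ys \<in> W_fin" and P: "atom (atom_of ys)"
      using \<open>R_fin xs ys\<close> W_fin_atom by (auto simp: R_fin_def)
    from \<open>xs \<in> W_fin\<close> have "label xs \<notin> atom_of ys"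
    proof (cases rule: W_fin_cases)
      case (1 G)
      then show ?thesis
        using atom_Bot[OF P] by simp
    next
      case (2 ps G D)
      then have "Box (Neg D) \<in> G" and "atom G"
        using \<open>j5\<close> unfolding good_child_def by blast+
      then have "Neg D \<in> atom_of ys" and "Neg D \<in> Phi"
        using R_fin_prec[OF \<open>R_fin xs ys\<close>] Phi_closed[of "Box (Neg D)" "Neg D"] 2(1)
        by (auto simp: prec_def atom_def)
      then show ?thesis
        using atom_Neg_iff[OF P] 2(1) by simp
    qed
    then show ?thesis
      using \<open>xs \<in> W_fin\<close> \<open>ys \<in> W_fin\<close> by (simp add: S_fin_def)
  qed
  ultimately show ?thesis
    using assms unfolding L_frame_def simp_frame_def by (auto simp: R_fin_def S_fin_def)
qed

lemma not_prov_countermodel: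
  assumes "\<not> prov j1 j5 A"
  shows "\<exists>(W :: (fm set \<times> fm) list set) R S. finite W \<and> L_frame j1 j5 W R S \<and> \<not> valid_in W R S A"
proof -
  have "consistent j1 j5 {Neg A}"
    unfolding consistent_def
  proof
    assume "derives j1 j5 {Neg A} Bot"
    then have "prov j1 j5 (Imp (Neg A) Bot)"
      using derives_deduction derives_empty by blast
    then have "prov j1 j5 A"
      by (intro prov_taut_consequence[of "[Imp (Neg A) Bot]"]) (auto simp: taut_def)
    with assms show False ..
  qed
  then obtain G where "atom G" and "consistent j1 j5 ({Neg A} \<union> literals G)"
    using atom_lindenbaum by blast
  then have "A \<notin> G"
    using consistent_literals_not_mem by blast
  moreover have root: "[(G, Bot)] \<in> W_fin"
    using \<open>atom G\<close> by (rule W_fin.root)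
  ultimately have "\<not> forces R_fin S_fin V_fin [(G, Bot)] A"
    using truth_lemma[OF subformulas_refl] by simp
  then have "\<not> valid_in W_fin R_fin S_fin A"
    using root unfolding valid_in_def by blast
  moreover have "L_frame j1 j5 W_fin R_fin S_fin"
    using L_frame_fin root by blast
  ultimately show ?thesis
    using finite_W_fin by blast
qed

end

theorem theorem3p1:
  fixes j1 j5 :: bool and A :: fm
  shows "(prov j1 j5 A \<longleftrightarrow>
            (\<forall>(W::'w::infinite set) R S. L_frame j1 j5 W R S \<longrightarrow> valid_in W R S A))
       \<and> (prov j1 j5 A \<longleftrightarrow>
            (\<forall>(W::'w::infinite set) R S. L_frame j1 j5 W R S \<and> finite W \<longrightarrow> valid_in W R S A))"
proof -
  have "prov j1 j5 A"
    if finite_valid: "\<forall>(W::'w::infinite set) R S. L_frame j1 j5 W R S \<and> finite W \<longrightarrow> valid_in W R S A"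
  proof (rule ccontr)
    assume "\<not> prov j1 j5 A"
    obtain W :: "(fm set \<times> fm) list set" and R S
      where "finite W" and "L_frame j1 j5 W R S" and "\<not> valid_in W R S A"
      using finite_countermodel.not_prov_countermodel[OF \<open>\<not> prov j1 j5 A\<close>] by blast
    obtain W' :: "'w set" and R' S'
      where "L_frame j1 j5 W' R' S' \<and> finite W' \<and> \<not> valid_in W' R' S' A"
      using L_frame_copy_into_infinite[OF \<open>finite W\<close> \<open>L_frame j1 j5 W R S\<close> \<open>\<not> valid_in W R S A\<close>]
      by blast
    then show False
      using finite_valid by blast
  qed
  moreover have "valid_in W R S A" if "prov j1 j5 A" and "L_frame j1 j5 W R S" for W :: "'w set" and R S
    using soundness that .
  ultimately show ?thesis
    by blast
qed

end
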